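(* Let $H$ be a separable infinite-dimensional Hilbert space, let $\mathcal{I}$ be the set of all isometries on $H$ endowed with the strong operator topology, and let $\mathcal{U}\subset\mathcal{I}$ be the set of all unitary operators on $H$. Then $\mathcal{U}$ is residual in $\mathcal{I}$, i.e., $\mathcal{I}\setminus\mathcal{U}$ is of first category in $\mathcal{I}$.
   Context: A subset of a topological space is of first category if it is a countable union of nowhere dense sets, and residual if its complement is of first category. The space $\mathcal{I}$ with the strong operator topology is a complete metric space, e.g. with the metric $d(T,S)=\sum_{j\ge1}\frac{\|Tx_j-Sx_j\|}{2^j\|x_j\|}$ for a fixed dense sequence $\{x_j\}$ in $H\setminus\{0\}$. *)

theory Defs
  imports "HOL-Analysis.Analysis"
begin

definition nowhere_dense_in :: "'a topology \<Rightarrow> 'a set \<Rightarrow> bool" where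
  "nowhere_dense_in X S \<longleftrightarrow> S \<subseteq> topspace X \<and> X interior_of (X closure_of S) = {}"

definition first_category_in :: "'a topology \<Rightarrow> 'a set \<Rightarrow> bool" where
  "first_category_in X S \<longleftrightarrow>
     (\<exists>F. countable F \<and> (\<forall>N\<in>F. nowhere_dense_in X N) \<and> S = \<Union>F)"

definition residual_in :: "'a topology \<Rightarrow> 'a set \<Rightarrow> bool" where
  "residual_in X S \<longleftrightarrow> S \<subseteq> topspace X \<and> first_category_in X (topspace X - S)"

text \<open>A complex Hilbert space is modelled as a real Hilbert space H (real part of the
  complex inner product) together with a complex structure J (multiplication by i):
  J is real-linear, isometric and J (J x) = - x.\<close>

definition complex_structure :: "('a::real_inner \<Rightarrow> 'a) \<Rightarrow> bool" where
  "complex_structure J \<longleftrightarrow> linear J \<and> (\<forall>x. J (J x) = - x) \<and> (\<forall>x. norm (J x) = norm x)"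

definition complex_linear_wrt :: "('a::real_vector \<Rightarrow> 'a) \<Rightarrow> ('a \<Rightarrow> 'a) \<Rightarrow> bool" where
  "complex_linear_wrt J T \<longleftrightarrow> linear T \<and> (\<forall>x. T (J x) = J (T x))"

definition isometries :: "('a::real_inner \<Rightarrow> 'a) \<Rightarrow> ('a \<Rightarrow> 'a) set" where
  "isometries J = {T. complex_linear_wrt J T \<and> (\<forall>x. norm (T x) = norm x)}"

definition unitaries :: "('a::real_inner \<Rightarrow> 'a) \<Rightarrow> ('a \<Rightarrow> 'a) set" where
  "unitaries J = {T \<in> isometries J. surj T}"

text \<open>The strong operator topology on a set of operators: pointwise norm convergence,
  i.e. the product topology on functions, restricted to the set.\<close>

definition SOT_on :: "('a \<Rightarrow> 'b::topological_space) set \<Rightarrow> ('a \<Rightarrow> 'b) topology" where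
  "SOT_on S = subtopology (product_topology (\<lambda>_. euclidean) UNIV) S"

end

theory Submission
  imports Defs
begin

text \<open>A non-surjective isometry T has closed range, so its range misses a small ball around a
  point of a countable dense set. Hence the non-unitary isometries form a countable union of
  SOT-closed sets of isometries whose range misses a fixed ball. Each of them has empty interior:
  a strong-operator neighbourhood of T only prescribes T on a finite set Y, and since the
  orthogonal complement of the finite-dimensional complex span of Y is nonzero, T can be
  followed by a complex reflection that fixes T (span Y) and moves the image of a suitable
  vector orthogonal to span Y onto the component of any prescribed point orthogonal to
  T (span Y). Here span Y means the span of Y and J Y, which is J-invariant.\<close>

lemma complex_structure_orthogonal_transformation:
  "complex_structure J \<Longrightarrow> orthogonal_transformation J"
  unfolding complex_structure_def orthogonal_transformation by blast

lemma complex_structure_inner: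
  "complex_structure J \<Longrightarrow> inner (J x) (J y) = inner x y"
  using complex_structure_orthogonal_transformation orthogonal_transformation_def by blast

lemma complex_structure_inner_left:
  assumes "complex_structure J"
  shows "inner (J x) y = - inner x (J y)"
proof -
  have "inner (J x) y = inner (J (J x)) (J y)"
    using complex_structure_inner[OF assms] by simp
  also have "\<dots> = - inner x (J y)"
    using assms by (simp add: complex_structure_def)
  finally show ?thesis .
qed

lemma complex_structure_inner_self:
  "complex_structure J \<Longrightarrow> inner x (J x) = 0"
  using complex_structure_inner_left[of J x x] by (simp add: inner_commute)

lemma isometries_iff:
  "T \<in> isometries J \<longleftrightarrow> orthogonal_transformation T \<and> (\<forall>x. T (J x) = J (T x))"
  unfolding isometries_def complex_linear_wrt_def orthogonal_transformation by blast

text \<open>The complex Householder reflection in the complex line through e: it is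
  z \<mapsto> z - 2 <z,e> e / <e,e> for the complex inner product <z,e> = z \<bullet> e + i (z \<bullet> J e).\<close>

definition complex_reflection :: "('a::real_inner \<Rightarrow> 'a) \<Rightarrow> 'a \<Rightarrow> 'a \<Rightarrow> 'a" where
  "complex_reflection J e z = z - (2 / inner e e) *\<^sub>R (inner z e *\<^sub>R e + inner z (J e) *\<^sub>R J e)"

lemma linear_complex_reflection: "linear (complex_reflection J e)"
  unfolding complex_reflection_def
  by (rule linearI) (simp_all add: algebra_simps)

lemma complex_reflection_commute:
  assumes J: "complex_structure J"
  shows "complex_reflection J e (J z) = J (complex_reflection J e z)"
proof -
  have "linear J" using J by (simp add: complex_structure_def)
  then have "J (complex_reflection J e z)
      = J z - (2 / inner e e) *\<^sub>R (inner z e *\<^sub>R J e + inner z (J e) *\<^sub>R J (J e))"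
    unfolding complex_reflection_def by (simp add: linear_diff linear_add linear_scale)
  also have "\<dots> = complex_reflection J e (J z)"
    using J complex_structure_inner_left[OF J, of z e] complex_structure_inner[OF J, of z e]
    by (simp add: complex_reflection_def complex_structure_def algebra_simps)
  finally show ?thesis by simp
qed

lemma norm_complex_reflection:
  assumes J: "complex_structure J"
  shows "norm (complex_reflection J e z) = norm z"
proof -
  define p where "p = (1 / inner e e) *\<^sub>R (inner z e *\<^sub>R e + inner z (J e) *\<^sub>R J e)"
  define q where "q = ((inner z e)\<^sup>2 + (inner z (J e))\<^sup>2) / inner e e"
  have "complex_reflection J e z = z - 2 *\<^sub>R p"
    by (simp add: complex_reflection_def p_def)
  moreover have "inner z p = q"
    by (simp add: p_def q_def inner_add_right power2_eq_square add_divide_distrib)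
  moreover have "inner p p = q"
    using complex_structure_inner[OF J, of e e] complex_structure_inner_self[OF J, of e]
    by (simp add: p_def q_def inner_add_left inner_add_right inner_commute[of "J e" e]
        power2_eq_square add_divide_distrib)
  ultimately have "inner (complex_reflection J e z) (complex_reflection J e z) = inner z z"
    by (simp add: inner_diff_left inner_diff_right inner_commute[of p z])
  then show ?thesis by (simp add: norm_eq_sqrt_inner)
qed

lemma complex_reflection_orthogonal_fixed:
  "inner z e = 0 \<Longrightarrow> inner z (J e) = 0 \<Longrightarrow> complex_reflection J e z = z"
  unfolding complex_reflection_def by simp

text \<open>The hypothesis inner c (J b) = 0 says that the complex inner product of c and b is real;
  without it no reflection of this kind exchanges c and b.\<close>

lemma complex_reflection_swap:
  assumes J: "complex_structure J" and "inner c (J b) = 0" and "norm c = norm b"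
  shows "complex_reflection J (c - b) c = b"
proof (cases "c = b")
  case True
  then show ?thesis by (simp add: complex_reflection_def)
next
  case False
  define e where "e = c - b"
  have "inner c c = inner b b" using assms(3) by (simp add: norm_eq_sqrt_inner)
  then have ee: "inner e e = 2 * inner c e"
    by (simp add: e_def inner_diff_left inner_diff_right inner_commute)
  have "linear J" using J by (simp add: complex_structure_def)
  then have cJe: "inner c (J e) = 0"
    using assms(2) complex_structure_inner_self[OF J, of c]
    by (simp add: e_def linear_diff inner_diff_right)
  have "inner e e \<noteq> 0" using False by (simp add: e_def)
  then have "2 / inner e e * inner c e = 1" unfolding ee by simp
  then have "complex_reflection J e c = c - e"
    unfolding complex_reflection_def cJe by (simp only: scaleR_scaleR scale_zero_left
        add_0_right scaleR_one)
  then show ?thesis by (simp add: e_def)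
qed

lemma complex_reflection_comp_isometry:
  assumes J: "complex_structure J" and T: "T \<in> isometries J"
  shows "complex_reflection J e \<circ> T \<in> isometries J"
proof -
  have "orthogonal_transformation (complex_reflection J e)"
    using linear_complex_reflection norm_complex_reflection[OF J]
    by (simp add: orthogonal_transformation)
  then show ?thesis
    using T complex_reflection_commute[OF J]
    by (simp add: isometries_iff orthogonal_transformation_compose)
qed

lemma orthogonal_decomposition_finite_span:
  fixes B :: "'a::real_inner set"
  assumes "finite B"
  obtains a where "a \<in> span B" "\<And>v. v \<in> span B \<Longrightarrow> orthogonal (x - a) v"
proof -
  have "\<exists>a\<in>span B. \<forall>y\<in>B. inner (x - a) y = 0"
    using assms
  proof (induction B arbitrary: x rule: finite_induct)
    case empty
    then show ?case by (auto intro: span_zero)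
  next
    case (insert v B)
    obtain a where a: "a \<in> span B" "\<forall>y\<in>B. inner (x - a) y = 0"
      using insert.IH by blast
    obtain av where av: "av \<in> span B" "\<forall>y\<in>B. inner (v - av) y = 0"
      using insert.IH by blast
    define w where "w = v - av"
    define t where "t = inner (x - a) w / inner w w"
    have orthB: "\<forall>y\<in>B. inner (x - (a + t *\<^sub>R w)) y = 0"
      using a(2) av(2) by (simp add: w_def inner_diff_left inner_add_left)
    then have orth_av: "inner (x - (a + t *\<^sub>R w)) av = 0"
      using orthogonal_to_span[OF av(1), of "x - (a + t *\<^sub>R w)"] by (simp add: orthogonal_def)
    have "inner (x - (a + t *\<^sub>R w)) v = inner (x - (a + t *\<^sub>R w)) (w + av)"
      by (simp add: w_def)
    also have "\<dots> = inner (x - a) w - t * inner w w"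
      using orth_av by (simp add: inner_add_right inner_diff_left inner_add_left)
    also have "\<dots> = 0"
      by (cases "inner w w = 0") (auto simp: t_def)
    finally have "inner (x - (a + t *\<^sub>R w)) v = 0" .
    moreover have "a + t *\<^sub>R w \<in> span (insert v B)"
      using a(1) av(1) unfolding w_def
      by (meson span_add span_diff span_mono span_scale span_base insertI1 subset_insertI subsetD)
    ultimately show ?case using orthB by auto
  qed
  then show thesis
    using that orthogonal_to_span by (metis orthogonal_def)
qed

lemma exists_orthogonal_to_finite_span:
  fixes B :: "'a::real_inner set"
  assumes "finite B" and "span B \<noteq> UNIV" and "r \<ge> 0"
  obtains u where "norm u = r" "\<And>v. v \<in> span B \<Longrightarrow> orthogonal u v"
proof -
  obtain z where "z \<notin> span B" using assms(2) by auto
  moreover obtain a where a: "a \<in> span B" "\<And>v. v \<in> span B \<Longrightarrow> orthogonal (z - a) v"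
    using orthogonal_decomposition_finite_span[OF assms(1)] by blast
  ultimately have "z - a \<noteq> 0" by auto
  then show thesis
    using that[of "(r / norm (z - a)) *\<^sub>R (z - a)"] a(2) assms(3)
    by (simp add: orthogonal_clauses)
qed

lemma complex_structure_span_invariant:
  assumes J: "complex_structure J" and "v \<in> span (Y \<union> J ` Y)"
  shows "J v \<in> span (Y \<union> J ` Y)"
proof -
  have "J ` (Y \<union> J ` Y) \<subseteq> span (Y \<union> J ` Y)"
  proof (rule image_subsetI)
    fix y assume y: "y \<in> Y \<union> J ` Y"
    show "J y \<in> span (Y \<union> J ` Y)"
    proof (cases "y \<in> Y")
      case True
      then show ?thesis by (simp add: span_base)
    next
      case False
      then obtain y0 where "y0 \<in> Y" "y = J y0" using y by auto
      then show ?thesis using J by (simp add: complex_structure_def span_neg span_base)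
    qed
  qed
  then have "J ` span (Y \<union> J ` Y) \<subseteq> span (Y \<union> J ` Y)"
    using J span_linear_image[of J] span_minimal[of _ "span _"]
    by (metis complex_structure_def subspace_span)
  then show ?thesis using assms(2) by blast
qed

lemma exists_unit_vector_orthogonal_2d:
  fixes p q :: real
  obtains \<alpha> \<beta> where "\<alpha>\<^sup>2 + \<beta>\<^sup>2 = 1" "\<alpha> * p + \<beta> * q = 0"
proof (cases "p\<^sup>2 + q\<^sup>2 = 0")
  case True
  then show thesis using that[of 1 0] by simp
next
  case False
  define r where "r = sqrt (p\<^sup>2 + q\<^sup>2)"
  have "r\<^sup>2 = p\<^sup>2 + q\<^sup>2" "r \<noteq> 0" using False by (auto simp: r_def)
  then show thesis
    using that[of "q / r" "- p / r"] False
    by (simp add: add_divide_distrib[symmetric] field_simps)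
qed

lemma norm_complex_rotation:
  assumes J: "complex_structure J" and "\<alpha>\<^sup>2 + \<beta>\<^sup>2 = 1"
  shows "norm (\<alpha> *\<^sub>R u + \<beta> *\<^sub>R J u) = norm u"
proof -
  have "inner (\<alpha> *\<^sub>R u + \<beta> *\<^sub>R J u) (\<alpha> *\<^sub>R u + \<beta> *\<^sub>R J u) = (\<alpha>\<^sup>2 + \<beta>\<^sup>2) * inner u u"
    using complex_structure_inner[OF J, of u u] complex_structure_inner_self[OF J, of u]
    by (simp add: inner_commute[of "J u" u] power2_eq_square algebra_simps)
  then show ?thesis using assms(2) by (simp add: norm_eq_sqrt_inner)
qed

lemma exists_reflection_partner:
  fixes J :: "'a::real_inner \<Rightarrow> 'a"
  assumes J: "complex_structure J" and T: "T \<in> isometries J" and "finite Y"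
    and inf: "\<forall>B::'a set. finite B \<longrightarrow> span B \<noteq> UNIV"
  obtains u where "\<And>v. v \<in> span (Y \<union> J ` Y) \<Longrightarrow> orthogonal u v"
    "norm (T u) = norm b" "inner (T u) (J b) = 0"
proof -
  let ?V = "Y \<union> J ` Y"
  have T': "orthogonal_transformation T" "\<And>z. T (J z) = J (T z)"
    using T by (auto simp: isometries_iff)
  have "finite ?V" using \<open>finite Y\<close> by simp
  moreover from this have "span ?V \<noteq> UNIV" by (rule inf[rule_format])
  ultimately obtain u0 where u0: "norm u0 = norm b" "\<And>v. v \<in> span ?V \<Longrightarrow> orthogonal u0 v"
    using exists_orthogonal_to_finite_span[OF _ _ norm_ge_zero[of b]] by blast
  obtain \<alpha> \<beta> where ab: "\<alpha>\<^sup>2 + \<beta>\<^sup>2 = 1" "\<alpha> * inner (T u0) (J b) + \<beta> * inner (T u0) b = 0"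
    using exists_unit_vector_orthogonal_2d by blast
  define u where "u = \<alpha> *\<^sub>R u0 + \<beta> *\<^sub>R J u0"
  have "orthogonal u v" if "v \<in> span ?V" for v
  proof -
    have "inner (J u0) v = 0"
      using u0(2)[OF complex_structure_span_invariant[OF J that]]
        complex_structure_inner_left[OF J, of u0 v]
      by (simp add: orthogonal_def)
    then show ?thesis using u0(2)[OF that] by (simp add: u_def orthogonal_def inner_add_left)
  qed
  moreover have "norm (T u) = norm b"
    using T' u0(1) norm_complex_rotation[OF J ab(1)] by (simp add: u_def orthogonal_transformation)
  moreover have "T u = \<alpha> *\<^sub>R T u0 + \<beta> *\<^sub>R J (T u0)"
    using T' by (simp add: u_def orthogonal_transformation_linear linear_add linear_scale)
  then have "inner (T u) (J b) = 0"
    using ab(2) complex_structure_inner[OF J, of "T u0" b] by (simp add: inner_add_left)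
  ultimately show thesis using that by blast
qed

lemma isometry_agreeing_on_finite_set_hits_point:
  fixes J :: "'a::real_inner \<Rightarrow> 'a"
  assumes J: "complex_structure J" and T: "T \<in> isometries J" and "finite Y"
    and inf: "\<forall>B::'a set. finite B \<longrightarrow> span B \<noteq> UNIV"
  obtains S where "S \<in> isometries J" "\<And>y. y \<in> Y \<Longrightarrow> S y = T y" "x \<in> range S"
proof -
  let ?V = "Y \<union> J ` Y"
  have T': "orthogonal_transformation T" "\<And>z. T (J z) = J (T z)"
    using T by (auto simp: isometries_iff)
  have span_TV: "span (T ` ?V) = T ` span ?V"
    using T' by (simp add: orthogonal_transformation_linear span_linear_image)
  obtain a where "a \<in> span (T ` ?V)" and a: "\<And>v. v \<in> span (T ` ?V) \<Longrightarrow> orthogonal (x - a) v"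
    using orthogonal_decomposition_finite_span[of "T ` ?V"] \<open>finite Y\<close> by auto
  then obtain w0 where w0: "w0 \<in> span ?V" "a = T w0" using span_TV by auto
  define b where "b = x - a"
  obtain u where u: "\<And>v. v \<in> span ?V \<Longrightarrow> orthogonal u v" "norm (T u) = norm b"
    "inner (T u) (J b) = 0"
    using exists_reflection_partner[OF J T \<open>finite Y\<close> inf] by blast
  define e where "e = T u - b"
  define S where "S = complex_reflection J e \<circ> T"
  have Te: "inner (T v) e = 0" if "v \<in> span ?V" for v
    using a[of "T v"] u(1)[OF that] T' that span_TV
    by (simp add: e_def b_def inner_diff_right orthogonal_def orthogonal_transformation_def
        inner_commute)
  have S_fixes: "S v = T v" if "v \<in> span ?V" for v
  proof -
    have "inner (T v) (J e) = - inner (T (J v)) e"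
      using complex_structure_inner_left[OF J, of "T v" e] T' by simp
    then have "inner (T v) (J e) = 0"
      using Te[OF complex_structure_span_invariant[OF J that]] by simp
    then show ?thesis
      using Te[OF that] by (simp add: S_def complex_reflection_orthogonal_fixed)
  qed
  have "S (w0 + u) = S w0 + S u"
    using T' by (simp add: S_def orthogonal_transformation_linear linear_complex_reflection
        linear_compose linear_add)
  also have "\<dots> = x"
    using S_fixes[OF w0(1)] w0(2) complex_reflection_swap[OF J u(3,2)]
    by (simp add: S_def e_def b_def)
  finally have "x \<in> range S" by (metis rangeI)
  moreover have "S y = T y" if "y \<in> Y" for y
    using S_fixes that by (simp add: span_base)
  ultimately show thesis
    using that complex_reflection_comp_isometry[OF J T] unfolding S_def by blast
qed

lemma topspace_SOT_on [simp]: "topspace (SOT_on S) = S"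
  by (simp add: SOT_on_def)

definition misses_ball :: "('a \<Rightarrow> 'b::metric_space) set \<Rightarrow> 'b \<Rightarrow> real \<Rightarrow> ('a \<Rightarrow> 'b) set" where
  "misses_ball S x r = {T \<in> S. range T \<inter> ball x r = {}}"

lemma closedin_misses_ball:
  fixes S :: "('a \<Rightarrow> 'b::metric_space) set"
  shows "closedin (SOT_on S) (misses_ball S x r)"
proof -
  have "closedin (product_topology (\<lambda>_. euclidean) UNIV)
      {f \<in> topspace (product_topology (\<lambda>_. euclidean) UNIV). f y \<in> - ball x r}" for y :: 'a
    by (rule closedin_continuous_map_preimage[where Y=euclidean])
      (simp_all add: continuous_map_product_projection[of y UNIV "\<lambda>_. euclidean", simplified]
        closed_Compl)
  then have "closedin (product_topology (\<lambda>_. euclidean) UNIV) {f. f y \<notin> ball x r}" for y :: 'a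
    by simp
  then have "closedin (product_topology (\<lambda>_. euclidean) UNIV) (\<Inter>y::'a. {f. f y \<notin> ball x r})"
    by (intro closedin_Inter) auto
  moreover have "misses_ball S x r = (\<Inter>y. {f. f y \<notin> ball x r}) \<inter> S"
    by (auto simp: misses_ball_def)
  ultimately show ?thesis
    unfolding SOT_on_def closedin_subtopology by blast
qed

text \<open>A basic strong-operator neighbourhood of T only constrains T at finitely many points.\<close>

lemma interior_of_SOT_on_eq_empty:
  assumes "\<And>T Y. T \<in> S \<Longrightarrow> finite Y \<Longrightarrow> \<exists>T'\<in>S - A. \<forall>y\<in>Y. T' y = T y"
  shows "SOT_on S interior_of A = {}"
proof (rule ccontr)
  assume "SOT_on S interior_of A \<noteq> {}"
  then obtain T U where U: "openin (SOT_on S) U" "T \<in> U" "U \<subseteq> A"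
    unfolding interior_of_def by auto
  then obtain W where W: "openin (product_topology (\<lambda>_. euclidean) UNIV) W" "U = W \<inter> S"
    unfolding SOT_on_def openin_subtopology by auto
  then obtain V where V: "finite {i. V i \<noteq> UNIV}" "T \<in> Pi\<^sub>E UNIV V" "Pi\<^sub>E UNIV V \<subseteq> W"
    using U(2) unfolding openin_product_topology_alt by force
  obtain T' where T': "T' \<in> S - A" "\<forall>y\<in>{i. V i \<noteq> UNIV}. T' y = T y"
    using assms[OF _ V(1)] U(2) W(2) by blast
  have "T' \<in> Pi\<^sub>E UNIV V"
    using T'(2) V(2) by (auto simp: PiE_iff) (metis UNIV_I)
  then show False using T'(1) U(3) V(3) W(2) by auto
qed

lemma nowhere_dense_misses_ball:
  fixes J :: "'a::real_inner \<Rightarrow> 'a"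
  assumes J: "complex_structure J" and inf: "\<forall>B::'a set. finite B \<longrightarrow> span B \<noteq> UNIV"
    and "r > 0"
  shows "nowhere_dense_in (SOT_on (isometries J)) (misses_ball (isometries J) x r)"
proof -
  have "\<exists>T'\<in>isometries J - misses_ball (isometries J) x r. \<forall>y\<in>Y. T' y = T y"
    if T: "T \<in> isometries J" and Y: "finite Y" for T Y
  proof -
    obtain S where "S \<in> isometries J" "\<And>y. y \<in> Y \<Longrightarrow> S y = T y" "x \<in> range S"
      using isometry_agreeing_on_finite_set_hits_point[OF J T Y inf] by blast
    moreover from \<open>x \<in> range S\<close> have "S \<notin> misses_ball (isometries J) x r"
      using \<open>r > 0\<close> by (auto simp: misses_ball_def)
    ultimately show ?thesis by blast
  qed
  then have "SOT_on (isometries J) interior_of misses_ball (isometries J) x r = {}"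
    by (rule interior_of_SOT_on_eq_empty)
  then show ?thesis
    by (simp add: nowhere_dense_in_def closure_of_closedin[OF closedin_misses_ball])
      (auto simp: misses_ball_def)
qed

lemma closed_range_norm_preserving:
  fixes T :: "'a::{real_normed_vector, complete_space} \<Rightarrow> 'b::real_normed_vector"
  assumes "linear T" and "\<And>x. norm (T x) = norm x"
  shows "closed (range T)"
proof -
  have "bounded_linear T"
    using assms by (intro bounded_linear_intro[where K=1]) (simp_all add: linear_add linear_scale)
  then have "complete (range T)"
    using assms(2) by (intro complete_isometric_image[of 1]) (simp_all add: complete_UNIV)
  then show ?thesis by (rule complete_imp_closed)
qed

lemma closed_disjoint_ball_around_dense:
  fixes C :: "'a::metric_space set"
  assumes "closed C" and "x \<notin> C" and "closure D = UNIV"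
  obtains d k where "d \<in> D" "C \<inter> ball d (1 / Suc k) = {}"
proof -
  obtain r where r: "r > 0" "ball x r \<subseteq> - C"
    using assms(1,2) open_contains_ball by (metis ComplI open_Compl)
  obtain d where d: "d \<in> D" "dist d x < r / 2"
    using assms(3) closure_approachable[of x D] \<open>r > 0\<close> by (metis UNIV_I half_gt_zero)
  obtain k where k: "1 / Suc k < r / 2"
    using reals_Archimedean[of "r / 2"] \<open>r > 0\<close> by (auto simp: inverse_eq_divide)
  have "ball d (1 / Suc k) \<subseteq> ball x r"
  proof
    fix z assume "z \<in> ball d (1 / Suc k)"
    then have "dist x z \<le> dist d x + dist d z" "dist d z < r / 2"
      using dist_triangle3[of x z d] k by auto
    then show "z \<in> ball x r" using d(2) by simp
  qed
  then show thesis using that[OF d(1)] r(2) by blast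
qed

lemma isometries_diff_unitaries_eq:
  fixes J :: "'a::{real_inner, complete_space} \<Rightarrow> 'a"
  assumes "closure D = UNIV"
  shows "isometries J - unitaries J
       = (\<Union>(d, k)\<in>D \<times> UNIV. misses_ball (isometries J) d (1 / Suc k))"
proof (intro equalityI subsetI)
  fix T assume T: "T \<in> isometries J - unitaries J"
  then obtain x where "x \<notin> range T" by (auto simp: unitaries_def)
  moreover have "closed (range T)"
    using T by (intro closed_range_norm_preserving) (auto simp: isometries_def complex_linear_wrt_def)
  ultimately obtain d k where "d \<in> D" "range T \<inter> ball d (1 / Suc k) = {}"
    using closed_disjoint_ball_around_dense assms by metis
  then show "T \<in> (\<Union>(d, k)\<in>D \<times> UNIV. misses_ball (isometries J) d (1 / Suc k))"
    using T by (auto simp: misses_ball_def)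
next
  fix T assume "T \<in> (\<Union>(d, k)\<in>D \<times> UNIV. misses_ball (isometries J) d (1 / Suc k))"
  then obtain d k where "T \<in> isometries J" "range T \<inter> ball d (1 / Suc k) = {}"
    by (auto simp: misses_ball_def)
  moreover have "d \<in> ball d (1 / Suc k)" by simp
  ultimately show "T \<in> isometries J - unitaries J" by (auto simp: unitaries_def)
qed

theorem mainTheorem1:
  fixes J :: "'a::{real_inner, complete_space} \<Rightarrow> 'a"
  assumes "complex_structure J"
    and "separable_space (euclidean :: 'a topology)"
    and "\<forall>B::'a set. finite B \<longrightarrow> span B \<noteq> UNIV"
  shows "residual_in (SOT_on (isometries J)) (unitaries J)
       \<and> first_category_in (SOT_on (isometries J)) (isometries J - unitaries J)"
proof -
  obtain D :: "'a set" where "countable D" "closure D = UNIV"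
    using assms(2) by (auto simp: separable_space_def)
  let ?F = "(\<lambda>(d, k). misses_ball (isometries J) d (1 / Suc k)) ` (D \<times> (UNIV :: nat set))"
  have "countable ?F" using \<open>countable D\<close> by simp
  moreover have "\<forall>N\<in>?F. nowhere_dense_in (SOT_on (isometries J)) N"
    using nowhere_dense_misses_ball[OF assms(1,3)] by auto
  moreover have "isometries J - unitaries J = \<Union>?F"
    using isometries_diff_unitaries_eq[OF \<open>closure D = UNIV\<close>] by simp
  ultimately have "first_category_in (SOT_on (isometries J)) (isometries J - unitaries J)"
    unfolding first_category_in_def by blast
  then show ?thesis by (auto simp: residual_in_def unitaries_def)
qed

end
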